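(* For each $x\in\{1,2,3,4\}$, a minimal-ABC tree does not contain a $D_{z,x}^4$-branch with $z\ge 216$.
   Context: All graphs are finite trees; $d(u)$ denotes the degree of a vertex $u$. The atom-bond connectivity index is $\mathrm{ABC}(G)=\sum_{uv\in E(G)}\sqrt{\frac{d(u)+d(v)-2}{d(u)d(v)}}$. A minimal-ABC tree is a tree whose ABC index is minimum among all trees with the same number of vertices. A vertex is big if its degree is at least $3$ and none of its neighbors has degree $2$. A minimal-ABC tree is regarded as a rooted tree whose root vertex is the center of the subgraph induced by its big vertices (this subgraph is a star); "children" refers to this rooting, and a branch with center $w$ means $w$ together with all its descendants. For $k\ge 2$, a $B_k$-branch is a center vertex of degree $k+1$ whose $k$ children each have degree $2$ and each has exactly one child, which is a leaf. For $x\in\{1,2,3,4\}$, a $D_{z,x}^4$-branch is a center vertex of degree $z+1$ whose $z$ children are the centers of $z-x$ $B_3$-branches and $x$ $B_4$-branches. *)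

theory Defs
  imports Complex_Main
begin

definition adj_rel :: "'a set set \<Rightarrow> ('a \<times> 'a) set" where
  "adj_rel E = {(u, v). {u, v} \<in> E}"

definition is_tree :: "'a set \<Rightarrow> 'a set set \<Rightarrow> bool" where
  "is_tree V E \<longleftrightarrow> finite V \<and> V \<noteq> {} \<and>
     (\<forall>e\<in>E. \<exists>u v. e = {u, v} \<and> u \<in> V \<and> v \<in> V \<and> u \<noteq> v) \<and>
     (\<forall>u\<in>V. \<forall>v\<in>V. (u, v) \<in> (adj_rel E)\<^sup>*) \<and>
     card E + 1 = card V"

definition deg :: "'a set set \<Rightarrow> 'a \<Rightarrow> nat" where
  "deg E u = card {v. {u, v} \<in> E}"

definition ABC :: "'a set set \<Rightarrow> real" where
  "ABC E = (\<Sum>e\<in>E. sqrt (((\<Sum>x\<in>e. real (deg E x)) - 2) / (\<Prod>x\<in>e. real (deg E x))))"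

text \<open>Minimal-ABC tree: ABC index minimal among all trees with the same number
  of vertices (every finite tree is isomorphic to one with vertices in nat).\<close>
definition minimal_ABC :: "'a set \<Rightarrow> 'a set set \<Rightarrow> bool" where
  "minimal_ABC V E \<longleftrightarrow> is_tree V E \<and>
     (\<forall>(V' :: nat set) E'. is_tree V' E' \<and> card V' = card V \<longrightarrow> ABC E \<le> ABC E')"

definition big_vertices :: "'a set \<Rightarrow> 'a set set \<Rightarrow> 'a set" where
  "big_vertices V E = {u \<in> V. deg E u \<ge> 3 \<and> (\<forall>v. {u, v} \<in> E \<longrightarrow> deg E v \<noteq> 2)}"

definition induced_edges :: "'a set set \<Rightarrow> 'a set \<Rightarrow> 'a set set" where
  "induced_edges E S = {e \<in> E. e \<subseteq> S}"

text \<open>c is a center of the star with vertex set S and edge set F: c is adjacent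
  to every other vertex (for a single edge both endpoints qualify).\<close>
definition star_center :: "'a set \<Rightarrow> 'a set set \<Rightarrow> 'a \<Rightarrow> bool" where
  "star_center S F c \<longleftrightarrow> c \<in> S \<and> (\<forall>b\<in>S - {c}. {c, b} \<in> F)"

definition is_root :: "'a set \<Rightarrow> 'a set set \<Rightarrow> 'a \<Rightarrow> bool" where
  "is_root V E r \<longleftrightarrow> star_center (big_vertices V E) (induced_edges E (big_vertices V E)) r"

definition child :: "'a set set \<Rightarrow> 'a \<Rightarrow> 'a \<Rightarrow> 'a \<Rightarrow> bool" where
  "child E r w v \<longleftrightarrow> {w, v} \<in> E \<and> (r, w) \<in> (adj_rel (E - {{w, v}}))\<^sup>*"

definition children :: "'a set set \<Rightarrow> 'a \<Rightarrow> 'a \<Rightarrow> 'a set" where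
  "children E r w = {v. child E r w v}"

definition is_B_branch :: "'a set set \<Rightarrow> 'a \<Rightarrow> nat \<Rightarrow> 'a \<Rightarrow> bool" where
  "is_B_branch E r k c \<longleftrightarrow> 2 \<le> k \<and> deg E c = k + 1 \<and> card (children E r c) = k \<and>
     (\<forall>v\<in>children E r c. deg E v = 2 \<and> card (children E r v) = 1 \<and>
        (\<forall>u\<in>children E r v. deg E u = 1))"

definition is_D4_branch :: "'a set set \<Rightarrow> 'a \<Rightarrow> nat \<Rightarrow> nat \<Rightarrow> 'a \<Rightarrow> bool" where
  "is_D4_branch E r z x w \<longleftrightarrow> x \<le> z \<and> deg E w = z + 1 \<and> card (children E r w) = z \<and>
     (\<forall>v\<in>children E r w. is_B_branch E r 3 v \<or> is_B_branch E r 4 v) \<and>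
     card {v \<in> children E r w. is_B_branch E r 3 v} = z - x \<and>
     card {v \<in> children E r w. is_B_branch E r 4 v} = x"

end

theory Submission
  imports Defs
begin

text \<open>
  Let \<open>w\<close> be the centre of a \<open>D\<^sup>4\<^sub>z\<^sub>,\<^sub>x\<close>-branch with parent \<open>p\<close>, let \<open>c - v - u\<close> be a
  pendant path of one of its \<open>B\<^sub>4\<close>-children \<open>c\<close>, and choose two disjoint sets \<open>M1\<close>, \<open>M2\<close>
  of 54 \<open>B\<^sub>3\<close>-children of \<open>w\<close> each. Detach the path from \<open>c\<close>, hang \<open>v\<close> and \<open>u\<close> directly
  below \<open>w\<close>, and move the children in \<open>M1\<close> below \<open>v\<close> and those in \<open>M2\<close> below \<open>u\<close>. This
  gives a tree on the same vertices in which only \<open>w, c, v, u\<close> change degree, namely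
  \<open>z + 1 \<mapsto> z - 105\<close>, \<open>5 \<mapsto> 4\<close>, \<open>2 \<mapsto> 55\<close> and \<open>1 \<mapsto> 55\<close>. The edges from \<open>c\<close> to its
  remaining children of degree 2 keep the weight \<open>sqrt (1/2)\<close>, so the ABC index changes only
  on the edges at \<open>w\<close>, \<open>v\<close> and \<open>u\<close>, and elementary estimates of the edge weight
  \<open>sqrt ((p + q - 2) / (p q))\<close> show that it strictly decreases once \<open>z \<ge> 216\<close> and \<open>x \<le> 4\<close>.
\<close>

section \<open>The edge weight\<close>

definition abc_weight :: "real \<Rightarrow> real \<Rightarrow> real" where
  "abc_weight p q = sqrt ((p + q - 2) / (p * q))"

lemma abc_weight_2: "p > 0 \<Longrightarrow> abc_weight p 2 = sqrt (1/2)"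
  unfolding abc_weight_def by simp

lemma abc_weight_ge_inverse_sqrt:
  assumes "2 \<le> s" "1 \<le> b"
  shows "1 / sqrt s \<le> abc_weight s b"
  unfolding abc_weight_def using assms
  by (intro real_le_rsqrt) (simp add: field_simps)

lemma sqrt_diff_le:
  fixes x y k :: real
  assumes "0 \<le> y" "y \<le> x" "0 < k" "k \<le> sqrt x + sqrt y"
  shows "sqrt x - sqrt y \<le> (x - y) / k"
proof -
  have "(sqrt x - sqrt y) * k \<le> (sqrt x - sqrt y) * (sqrt x + sqrt y)"
    using assms by (intro mult_left_mono) auto
  also have "\<dots> = x - y"
    using assms by (simp add: algebra_simps)
  finally show ?thesis using assms by (simp add: pos_le_divide_eq)
qed

lemma abc_weight_diff_le:
  assumes "2 \<le> s" "s \<le> a" "1 \<le> b"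
  shows "abc_weight s b - abc_weight a b \<le> 1 / sqrt s - 1 / sqrt a"
proof -
  define F1 where "F1 = abc_weight s b"
  define F2 where "F2 = abc_weight a b"
  have F1: "F1^2 = (s + b - 2) / (s * b)" and F2: "F2^2 = (a + b - 2) / (a * b)"
    unfolding F1_def F2_def abc_weight_def using assms by simp_all
  have low: "1 / sqrt s \<le> F1" "1 / sqrt a \<le> F2"
    unfolding F1_def F2_def using abc_weight_ge_inverse_sqrt assms by auto
  have inv_le: "1 / sqrt a \<le> 1 / sqrt s"
    using assms by (simp add: frac_le)
  show ?thesis
  proof (cases "F1 \<le> F2")
    case True
    with inv_le show ?thesis unfolding F1_def F2_def by simp
  next
    case False
    have "F1^2 - F2^2 = (1/s - 1/a) * (1 - 2/b)"
      unfolding F1 F2 using assms by (simp add: field_simps)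
    also have "\<dots> \<le> 1/s - 1/a"
      using assms by (intro mult_left_le) (auto simp: frac_le)
    also have "\<dots> = (1 / sqrt s - 1 / sqrt a) * (1 / sqrt s + 1 / sqrt a)"
      using assms by (simp add: algebra_simps power_divide flip: power2_eq_square)
    also have "\<dots> \<le> (1 / sqrt s - 1 / sqrt a) * (F1 + F2)"
      using low inv_le by (intro mult_left_mono) auto
    finally have "(F1 - F2) * (F1 + F2) \<le> (1 / sqrt s - 1 / sqrt a) * (F1 + F2)"
      by (simp add: algebra_simps power2_eq_square)
    moreover have "0 < F1 + F2"
      using low assms by (smt (verit) divide_pos_pos real_sqrt_gt_zero)
    ultimately show ?thesis unfolding F1_def F2_def by simp
  qed
qed

lemma abc_weight_4: "0 < t \<Longrightarrow> abc_weight t 4 = sqrt (1/4 + 1/(2*t))"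
  unfolding abc_weight_def by (simp add: field_simps)

lemma abc_weight_5: "0 < t \<Longrightarrow> abc_weight t 5 = sqrt (1/5 + 3/(5*t))"
  unfolding abc_weight_def by (simp add: field_simps)

lemma inverse_sqrt_diff_le:
  fixes s :: real
  assumes "111 \<le> s"
  shows "1 / sqrt s - 1 / sqrt (s + 106) \<le> 273/10000"
proof -
  define p where "p = sqrt s"
  define q where "q = sqrt (s + 106)"
  have p: "10.5 \<le> p"
    unfolding p_def using assms by (intro real_le_rsqrt) (simp add: power2_eq_square)
  have q: "14.7 \<le> q"
    unfolding q_def using assms by (intro real_le_rsqrt) (simp add: power2_eq_square)
  have "(q - p) * (q + p) = 106"
    unfolding p_def q_def using assms by (simp add: algebra_simps)
  then have "q - p = 106 / (q + p)"
    using p q by (simp add: eq_divide_eq)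
  also have "\<dots> \<le> 106 / 25.2"
    using p q by (intro divide_left_mono) auto
  finally have qp: "q - p \<le> 106 / 25.2" .
  have "1 / p - 1 / q = (q - p) / (p * q)"
    using p q by (simp add: field_simps)
  also have "\<dots> \<le> (106 / 25.2) / (10.5 * 14.7)"
    using p q qp by (intro frac_le mult_mono) auto
  also have "\<dots> \<le> 273/10000"
    by simp
  finally show ?thesis unfolding p_def q_def .
qed

lemma abc_weight_4_estimate:
  fixes s :: real
  assumes "111 \<le> s"
  shows "abc_weight (s + 106) 4 \<le> abc_weight s 4"
    and "107/2 + (s + 105) * (abc_weight s 4 - abc_weight (s + 106) 4) \<le> 107 * abc_weight s 4"
proof -
  define S where "S = abc_weight s 4"
  define A where "A = abc_weight (s + 106) 4"
  have S: "S = sqrt (1/4 + 1/(2*s))" and A: "A = sqrt (1/4 + 1/(2*(s + 106)))"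
    unfolding S_def A_def using assms by (simp_all add: abc_weight_4)
  have half: "1/2 \<le> A" "1/2 \<le> S"
    unfolding S A using assms by (intro real_le_rsqrt, simp add: power2_eq_square)+
  show "A \<le> S"
    unfolding S A using assms by (intro real_sqrt_le_mono add_left_mono divide_left_mono) auto
  have "1/(2*(s + 106)) \<le> 1/(2*s)"
    using assms by (simp add: frac_le)
  then have "S - A \<le> ((1/4 + 1/(2*s)) - (1/4 + 1/(2*(s + 106)))) / 1"
    using half assms unfolding S A by (intro sqrt_diff_le) auto
  also have "\<dots> = 53 / (s * (s + 106))"
    using assms by (simp add: divide_simps) (simp add: algebra_simps)
  finally have "(s + 105) * (S - A) \<le> (s + 106) * (53 / (s * (s + 106)))"
    using \<open>A \<le> S\<close> assms by (intro mult_mono) auto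
  also have "\<dots> = 53 / s"
    using assms by (simp add: divide_simps)
  finally have loss: "(s + 105) * (S - A) \<le> 53 / s" .
  \<comment> \<open>\<open>sqrt (1/4 + h) \<ge> 1/2 + 0.995 h\<close> for the small \<open>h = 1/(2s)\<close>\<close>
  have "(1/2) * (1 + 995/1000 / s) \<le> S"
    unfolding S using assms
    by (intro real_le_rsqrt) (simp add: field_simps power2_eq_square)
  then have "107/2 + 53 / s \<le> 107 * S"
    using assms by (simp add: field_simps)
  with loss show "107/2 + (s + 105) * (S - A) \<le> 107 * S"
    by simp
qed

lemma abc_weight_5_estimate:
  fixes s :: real
  assumes "111 \<le> s"
  shows "abc_weight (s + 106) 5 \<le> abc_weight s 5"
    and "abc_weight s 5 - abc_weight (s + 106) 5 \<le> 31/10000"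
    and "4472/10000 \<le> abc_weight s 5"
proof -
  define S where "S = abc_weight s 5"
  define A where "A = abc_weight (s + 106) 5"
  have S: "S = sqrt (1/5 + 3/(5*s))" and A: "A = sqrt (1/5 + 3/(5*(s + 106)))"
    unfolding S_def A_def using assms by (simp_all add: abc_weight_5)
  show "4472/10000 \<le> S"
    unfolding S using assms by (intro real_le_rsqrt) (simp add: power2_eq_square)
  moreover have "44/100 \<le> A"
    unfolding A using assms by (intro real_le_rsqrt) (simp add: power2_eq_square)
  moreover have "3/(5*(s + 106)) \<le> 3/(5*s)"
    using assms by (simp add: frac_le)
  ultimately have "S - A \<le> ((1/5 + 3/(5*s)) - (1/5 + 3/(5*(s + 106)))) / 0.88"
    using assms unfolding S A by (intro sqrt_diff_le) auto
  also have "\<dots> = 318 / (5 * s * (s + 106)) / 0.88"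
    using assms by (simp add: divide_simps) (simp add: algebra_simps)
  also have "\<dots> \<le> 318 / (5 * 111 * 217) / 0.88"
    using assms by (intro divide_right_mono divide_left_mono mult_mono) auto
  also have "\<dots> \<le> 31/10000"
    by simp
  finally show "S - A \<le> 31/10000" .
  show "A \<le> S"
    unfolding S A using assms by (intro real_sqrt_le_mono add_left_mono divide_left_mono) auto
qed

lemma abc_weight_55_le:
  fixes s :: real
  assumes "111 \<le> s"
  shows "abc_weight s 55 \<le> 164/1000"
proof -
  have "53/(55*s) \<le> 53/(55*111)"
    using assms by (intro divide_left_mono) auto
  then have "(s + 55 - 2) / (s * 55) \<le> (164/1000)^2"
    using assms by (simp add: field_simps power2_eq_square)
  then show ?thesis
    unfolding abc_weight_def by (intro real_le_lsqrt) auto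
qed

lemma abc_weight_55_4_le: "abc_weight 55 4 \<le> 50902/100000"
  unfolding abc_weight_def by (intro real_le_lsqrt) (auto simp: power2_eq_square)

lemma abc_switch_gain:
  fixes z x b :: real
  assumes z: "216 \<le> z" and x: "1 \<le> x" "x \<le> 4" and b: "1 \<le> b"
  shows "(z - x - 107) * abc_weight (z - 105) 4 + (x - 1) * abc_weight (z - 105) 5
           + abc_weight (z - 105) b + 2 * abc_weight (z - 105) 55 + 108 * abc_weight 55 4
         < (z - x) * abc_weight (z + 1) 4 + x * abc_weight (z + 1) 5 + abc_weight (z + 1) b
           + 2 * sqrt (1/2)"
proof -
  define s where "s = z - 105"
  have s: "111 \<le> s" and zs: "z = s + 105" "z + 1 = s + 106"
    unfolding s_def using z by auto
  define S4 where "S4 = abc_weight s 4"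
  define S5 where "S5 = abc_weight s 5"
  define A4 where "A4 = abc_weight (s + 106) 4"
  define A5 where "A5 = abc_weight (s + 106) 5"
  \<comment> \<open>The degree \<open>b\<close> of the parent is unknown, hence the uniform bound from
    \<open>abc_weight_diff_le\<close> for its edge; the estimates leave a margin of about 0.02.\<close>
  note w4 = abc_weight_4_estimate[OF s, folded S4_def A4_def]
  note w5 = abc_weight_5_estimate[OF s, folded S5_def A5_def]
  have "(z - x) * (S4 - A4) \<le> (s + 105) * (S4 - A4)"
    using w4(1) x zs by (intro mult_right_mono) auto
  moreover have "x * (S5 - A5) \<le> 4 * (31/10000)"
    using w5(1,2) x by (intro mult_mono) auto
  moreover have "abc_weight s b - abc_weight (s + 106) b \<le> 273/10000"
    using abc_weight_diff_le[of s "s + 106" b] inverse_sqrt_diff_le[OF s] s b by simp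
  moreover have "707105/1000000 \<le> sqrt (1/2)"
    by (intro real_le_rsqrt) (simp add: power2_eq_square)
  ultimately show ?thesis
    using w4(2) w5(3) abc_weight_55_le[OF s] abc_weight_55_4_le
    unfolding s_def[symmetric] zs(2) S4_def S5_def A4_def A5_def
    by (simp add: algebra_simps)
qed


section \<open>Neighbourhoods and trees\<close>

definition neighbors :: "'a set set \<Rightarrow> 'a \<Rightarrow> 'a set" where
  "neighbors E t = {s. {t, s} \<in> E}"

definition star_edges :: "'a \<Rightarrow> 'a set \<Rightarrow> 'a set set" where
  "star_edges t S = (\<lambda>y. {t, y}) ` S"

definition abc_edge :: "'a set set \<Rightarrow> 'a set \<Rightarrow> real" where
  "abc_edge E e = sqrt (((\<Sum>x\<in>e. real (deg E x)) - 2) / (\<Prod>x\<in>e. real (deg E x)))"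

lemma deg_eq_card_neighbors: "deg E t = card (neighbors E t)"
  unfolding deg_def neighbors_def ..

lemma in_neighbors_commute: "s \<in> neighbors E t \<longleftrightarrow> t \<in> neighbors E s"
  unfolding neighbors_def by (simp add: insert_commute)

lemma ABC_eq_sum_abc_edge: "ABC E = sum (abc_edge E) E"
  unfolding ABC_def abc_edge_def ..

lemma abc_edge_doubleton: "a \<noteq> b \<Longrightarrow> abc_edge E {a, b} = abc_weight (deg E a) (deg E b)"
  unfolding abc_edge_def abc_weight_def by simp

lemma doubleton_in_star_edges:
  "{a, b} \<in> star_edges t S \<longleftrightarrow> (a = t \<and> b \<in> S) \<or> (b = t \<and> a \<in> S)"
  unfolding star_edges_def by (auto simp: doubleton_eq_iff)

lemma inj_on_doubleton: "inj_on (\<lambda>y. {t, y}) S"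
  by (auto simp: inj_on_def doubleton_eq_iff)

lemma finite_star_edges: "finite S \<Longrightarrow> finite (star_edges t S)"
  unfolding star_edges_def by simp

lemma card_star_edges: "card (star_edges t S) = card S"
  unfolding star_edges_def by (simp add: card_image inj_on_doubleton)

lemma sum_abc_edge_star_edges:
  "t \<notin> S \<Longrightarrow> sum (abc_edge E) (star_edges t S) = (\<Sum>y\<in>S. abc_weight (deg E t) (deg E y))"
  unfolding star_edges_def sum.reindex[OF inj_on_doubleton] o_def
  by (intro sum.cong refl abc_edge_doubleton) blast

lemma edges_meeting_eq_star_edges:
  assumes "\<forall>e\<in>E. \<exists>a b. e = {a, b}"
  shows "{e \<in> E. e \<inter> S \<noteq> {}} = (\<Union>t\<in>S. star_edges t (neighbors E t))"
proof (intro equalityI subsetI)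
  fix e assume "e \<in> {e \<in> E. e \<inter> S \<noteq> {}}"
  then obtain t where e: "e \<in> E" "t \<in> e" "t \<in> S"
    by blast
  obtain a b where "e = {a, b}"
    using assms \<open>e \<in> E\<close> by blast
  with \<open>t \<in> e\<close> have "e = {t, if t = a then b else a}"
    by auto
  with \<open>e \<in> E\<close> have "e \<in> star_edges t (neighbors E t)"
    unfolding star_edges_def neighbors_def by auto
  with e show "e \<in> (\<Union>t\<in>S. star_edges t (neighbors E t))"
    by blast
qed (auto simp: star_edges_def neighbors_def)

lemma ABC_diff_eq_edges_meeting:
  assumes "finite E" "finite E'"
    and same_edges: "\<And>e. e \<inter> S = {} \<Longrightarrow> e \<in> E \<longleftrightarrow> e \<in> E'"
    and same_weights: "\<And>e. e \<in> E \<Longrightarrow> e \<inter> S = {} \<Longrightarrow> abc_edge E' e = abc_edge E e"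
  shows "ABC E - ABC E' = sum (abc_edge E) {e \<in> E. e \<inter> S \<noteq> {}} - sum (abc_edge E') {e \<in> E'. e \<inter> S \<noteq> {}}"
proof -
  have split: "sum (abc_edge F) F = sum (abc_edge F) {e \<in> F. e \<inter> S \<noteq> {}} + sum (abc_edge F) {e \<in> F. e \<inter> S = {}}"
    if "finite F" for F :: "'a set set"
    using that by (subst sum.union_disjoint[symmetric]) (auto intro: sum.cong)
  have "{e \<in> E'. e \<inter> S = {}} = {e \<in> E. e \<inter> S = {}}"
    using same_edges by blast
  then have "sum (abc_edge E') {e \<in> E'. e \<inter> S = {}} = sum (abc_edge E) {e \<in> E. e \<inter> S = {}}"
    using same_weights by (auto intro: sum.cong)
  then show ?thesis
    unfolding ABC_eq_sum_abc_edge using split assms(1,2) by simp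
qed

lemma is_tree_edgeD:
  assumes "is_tree V E" "{a, b} \<in> E"
  shows "a \<in> V" "b \<in> V" "a \<noteq> b"
proof -
  obtain s t where "{a, b} = {s, t}" "s \<in> V" "t \<in> V" "s \<noteq> t"
    using assms unfolding is_tree_def by blast
  then show "a \<in> V" "b \<in> V" "a \<noteq> b"
    by (auto simp: doubleton_eq_iff)
qed

lemma is_tree_edges_doubleton: "is_tree V E \<Longrightarrow> \<forall>e\<in>E. \<exists>a b. e = {a, b}"
  unfolding is_tree_def by blast

lemma is_tree_finite_edges:
  assumes "is_tree V E"
  shows "finite E"
proof -
  have "\<forall>e\<in>E. \<exists>a b. e = {a, b} \<and> a \<in> V \<and> b \<in> V \<and> a \<noteq> b" "finite V"
    using assms by (simp_all add: is_tree_def)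
  then show ?thesis
    by (metis Pow_iff finite_Pow_iff finite_subset insert_subset empty_subsetI subsetI)
qed

lemma is_tree_neighbors_subset: "is_tree V E \<Longrightarrow> neighbors E t \<subseteq> V"
  unfolding neighbors_def by (blast dest: is_tree_edgeD(2))

lemma is_tree_finite_neighbors:
  assumes "is_tree V E"
  shows "finite (neighbors E t)"
  using finite_subset[OF is_tree_neighbors_subset[OF assms]] assms unfolding is_tree_def by blast

lemma is_tree_notin_neighbors: "is_tree V E \<Longrightarrow> t \<notin> neighbors E t"
  unfolding neighbors_def using is_tree_edgeD(3) by fastforce

lemma adj_rel_rtrancl_edge: "{a, b} \<in> E \<Longrightarrow> (a, b) \<in> (adj_rel E)\<^sup>*"
  unfolding adj_rel_def by (rule r_into_rtrancl) simp

lemma adj_rel_rtrancl_sym: "(a, b) \<in> (adj_rel E)\<^sup>* \<Longrightarrow> (b, a) \<in> (adj_rel E)\<^sup>*"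
proof -
  have "(adj_rel E)\<inverse> = adj_rel E"
    unfolding adj_rel_def by (auto simp: insert_commute)
  then show "(a, b) \<in> (adj_rel E)\<^sup>* \<Longrightarrow> (b, a) \<in> (adj_rel E)\<^sup>*"
    by (metis rtrancl_converseI)
qed

lemma card_exchange:
  assumes "finite E" "R \<subseteq> E" "finite A" "A \<inter> E = {}" "card A = card R"
  shows "card (E - R \<union> A) = card E"
proof -
  have "finite R" "card R \<le> card E"
    using assms(1,2) by (auto intro: finite_subset card_mono)
  have "card (E - R \<union> A) = card (E - R) + card A"
    using assms(1,3,4) by (intro card_Un_disjoint) auto
  also have "card (E - R) = card E - card R"
    using \<open>finite R\<close> assms(2) by (rule card_Diff_subset)
  finally show ?thesis
    using assms(5) \<open>card R \<le> card E\<close> by simp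
qed

lemma is_tree_exchange_edges:
  assumes tree: "is_tree V E" and "R \<subseteq> E" "finite A" "A \<inter> E = {}" "card A = card R"
    and added: "\<forall>e\<in>A. \<exists>a b. e = {a, b} \<and> a \<in> V \<and> b \<in> V \<and> a \<noteq> b"
    and reconnected: "\<And>a b. {a, b} \<in> R \<Longrightarrow> (a, b) \<in> (adj_rel (E - R \<union> A))\<^sup>*"
  shows "is_tree V (E - R \<union> A)"
proof -
  let ?E' = "E - R \<union> A"
  have "adj_rel E \<subseteq> (adj_rel ?E')\<^sup>*"
  proof
    fix q assume "q \<in> adj_rel E"
    then obtain a b where q: "q = (a, b)" "{a, b} \<in> E"
      unfolding adj_rel_def by auto
    show "q \<in> (adj_rel ?E')\<^sup>*"
    proof (cases "{a, b} \<in> R")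
      case True
      then show ?thesis using reconnected q by simp
    next
      case False
      then have "{a, b} \<in> ?E'" using q by blast
      then show ?thesis using q by (simp add: adj_rel_rtrancl_edge)
    qed
  qed
  then have "(adj_rel E)\<^sup>* \<subseteq> (adj_rel ?E')\<^sup>*"
    by (rule rtrancl_subset_rtrancl)
  then have "\<forall>a\<in>V. \<forall>b\<in>V. (a, b) \<in> (adj_rel ?E')\<^sup>*"
    using tree unfolding is_tree_def by blast
  moreover have "card ?E' = card E"
    using is_tree_finite_edges[OF tree] assms(2-5) by (rule card_exchange)
  moreover have "\<forall>e\<in>?E'. \<exists>a b. e = {a, b} \<and> a \<in> V \<and> b \<in> V \<and> a \<noteq> b"
    using tree added unfolding is_tree_def by blast
  ultimately show ?thesis
    using tree unfolding is_tree_def by simp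
qed

section \<open>The switching transformation\<close>

text \<open>\<open>Ch3\<close> and \<open>Ch4\<close> are the children of \<open>w\<close>, the centres of its \<open>B\<^sub>3\<close>- and \<open>B\<^sub>4\<close>-branches.\<close>

locale D4_switch =
  fixes V :: "'a set" and E :: "'a set set"
    and w p c v u :: 'a and Ch3 Ch4 M1 M2 :: "'a set"
  assumes tree: "is_tree V E"
    and neighbors_w: "neighbors E w = insert p (Ch3 \<union> Ch4)"
    and p_notin: "p \<notin> Ch3 \<union> Ch4"
    and deg_Ch3: "\<And>y. y \<in> Ch3 \<Longrightarrow> deg E y = 4"
    and deg_Ch4: "\<And>y. y \<in> Ch4 \<Longrightarrow> deg E y = 5"
    and c_in: "c \<in> Ch4"
    and deg_neighbors_c: "\<And>t. t \<in> neighbors E c \<Longrightarrow> t \<noteq> w \<Longrightarrow> deg E t = 2"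
    and neighbors_v: "neighbors E v = {c, u}"
    and neighbors_u: "neighbors E u = {v}"
    and M1_M2: "M1 \<subseteq> Ch3" "M2 \<subseteq> Ch3" "M1 \<inter> M2 = {}" "card M1 = 54" "card M2 = 54"
begin

definition M :: "'a set" where
  "M = M1 \<union> M2"

definition removed :: "'a set set" where
  "removed = {{c, v}, {v, u}} \<union> star_edges w M"

definition added :: "'a set set" where
  "added = {{w, v}, {w, u}} \<union> star_edges v M1 \<union> star_edges u M2"

definition switched :: "'a set set" where
  "switched = E - removed \<union> added"

lemma finite_Ch: "finite Ch3" "finite Ch4"
  using is_tree_finite_neighbors[OF tree, of w] neighbors_w by auto

lemma finite_M: "finite M1" "finite M2" "finite M"
  using finite_Ch M1_M2 finite_subset unfolding M_def by auto

lemma M_subset: "M \<subseteq> Ch3"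
  using M1_M2 unfolding M_def by auto

lemma card_M: "card M = 108"
  using M1_M2 finite_M unfolding M_def by (simp add: card_Un_disjoint)

lemma deg_M: "y \<in> M \<Longrightarrow> deg E y = 4"
  using M_subset deg_Ch3 by auto

lemma Ch_disjoint: "Ch3 \<inter> Ch4 = {}"
  using deg_Ch3 deg_Ch4 by fastforce

lemma card_Ch3_ge: "108 \<le> card Ch3"
  using card_M card_mono[OF finite_Ch(1) M_subset] by simp

lemma card_Ch4_ge: "1 \<le> card Ch4"
  using finite_Ch c_in by (auto simp: Suc_le_eq card_gt_0_iff)

lemma deg_w: "deg E w = card Ch3 + card Ch4 + 1"
  unfolding deg_eq_card_neighbors neighbors_w
  using finite_Ch Ch_disjoint p_notin by (simp add: card_Un_disjoint)

lemma deg_c: "deg E c = 5"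
  using deg_Ch4 c_in by simp

lemma deg_u: "deg E u = 1"
  unfolding deg_eq_card_neighbors neighbors_u by simp

lemma deg_v: "deg E v = 2"
  using deg_c deg_u unfolding deg_eq_card_neighbors neighbors_v by (auto simp: card_insert_if)

lemma distinct_vertices: "w \<noteq> c" "w \<noteq> v" "w \<noteq> u" "c \<noteq> v" "c \<noteq> u" "v \<noteq> u"
  using deg_w deg_c deg_v deg_u card_Ch3_ge by auto

lemma notin_M: "w \<notin> M" "c \<notin> M" "v \<notin> M" "u \<notin> M"
  using deg_w deg_c deg_v deg_u deg_M card_Ch3_ge by fastforce+

lemma v_u_notin_neighbors_w: "v \<notin> neighbors E w" "u \<notin> neighbors E w"
  using neighbors_v neighbors_u distinct_vertices in_neighbors_commute by fastforce+

lemma edge_w_p: "{w, p} \<in> E"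
  using neighbors_w unfolding neighbors_def by auto

lemma p_distinct: "p \<noteq> w" "p \<noteq> c" "p \<noteq> v" "p \<noteq> u" "p \<notin> M"
proof -
  show "p \<noteq> w"
    using is_tree_edgeD(3)[OF tree edge_w_p] by metis
  show "p \<noteq> c" "p \<notin> M"
    using p_notin c_in M_subset by auto
  show "p \<noteq> v" "p \<noteq> u"
    using v_u_notin_neighbors_w neighbors_w by auto
qed

lemma M1_M2_subset_M: "M1 \<subseteq> M" "M2 \<subseteq> M"
  unfolding M_def by auto

lemmas switch_facts = distinct_vertices notin_M M1_M2_subset_M M1_M2(3)

lemma neighbors_switched_w: "neighbors switched w = insert v (insert u (neighbors E w - M))"
  using switch_facts v_u_notin_neighbors_w
  unfolding neighbors_def switched_def removed_def added_def
  by (auto simp: doubleton_in_star_edges doubleton_eq_iff)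

lemma neighbors_switched_c: "neighbors switched c = neighbors E c - {v}"
  using switch_facts
  unfolding neighbors_def switched_def removed_def added_def
  by (auto simp: doubleton_in_star_edges doubleton_eq_iff)

lemma neighbors_switched_v: "neighbors switched v = insert w M1"
  using switch_facts neighbors_v
  unfolding neighbors_def switched_def removed_def added_def
  by (auto simp: doubleton_in_star_edges doubleton_eq_iff)

lemma neighbors_switched_u: "neighbors switched u = insert w M2"
  using switch_facts neighbors_u
  unfolding neighbors_def switched_def removed_def added_def
  by (auto simp: doubleton_in_star_edges doubleton_eq_iff)

lemma neighbors_switched_M1:
  "y \<in> M1 \<Longrightarrow> neighbors switched y = insert v (neighbors E y - {w})"
  using switch_facts
  unfolding neighbors_def switched_def removed_def added_def
  by (auto simp: doubleton_in_star_edges doubleton_eq_iff)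

lemma neighbors_switched_M2:
  "y \<in> M2 \<Longrightarrow> neighbors switched y = insert u (neighbors E y - {w})"
  using switch_facts
  unfolding neighbors_def switched_def removed_def added_def
  by (auto simp: doubleton_in_star_edges doubleton_eq_iff)

lemma neighbors_switched_other:
  "t \<notin> {w, c, v, u} \<Longrightarrow> t \<notin> M \<Longrightarrow> neighbors switched t = neighbors E t"
  unfolding neighbors_def switched_def removed_def added_def M_def
  by (auto simp: doubleton_in_star_edges doubleton_eq_iff)

lemma deg_switched_w: "deg switched w = card Ch3 + card Ch4 - 105"
proof -
  have "M \<subseteq> neighbors E w"
    using M_subset neighbors_w by auto
  then have "card (neighbors E w - M) = card Ch3 + card Ch4 + 1 - 108"
    using deg_w card_M finite_M(3) unfolding deg_eq_card_neighbors by (simp add: card_Diff_subset)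
  then show ?thesis
    unfolding deg_eq_card_neighbors neighbors_switched_w
    using is_tree_finite_neighbors[OF tree] v_u_notin_neighbors_w distinct_vertices card_Ch3_ge
    by simp
qed

lemma deg_switched_c: "deg switched c = 4"
proof -
  have "v \<in> neighbors E c"
    using neighbors_v in_neighbors_commute by fastforce
  then show ?thesis
    using deg_c is_tree_finite_neighbors[OF tree]
    unfolding deg_eq_card_neighbors neighbors_switched_c by simp
qed

lemma deg_switched_v: "deg switched v = 55" and deg_switched_u: "deg switched u = 55"
proof -
  have "w \<notin> M1" "w \<notin> M2"
    using notin_M M1_M2_subset_M by auto
  then show "deg switched v = 55" "deg switched u = 55"
    using finite_M M1_M2
    unfolding deg_eq_card_neighbors neighbors_switched_v neighbors_switched_u by auto
qed

lemma deg_switched_other: "t \<notin> {w, c, v, u} \<Longrightarrow> deg switched t = deg E t"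
proof (cases "t \<in> M")
  case True
  assume t: "t \<notin> {w, c, v, u}"
  have "w \<in> neighbors E t"
    using True M_subset neighbors_w in_neighbors_commute by fastforce
  moreover have "v \<notin> neighbors E t" "u \<notin> neighbors E t"
    using t neighbors_v neighbors_u in_neighbors_commute by fastforce+
  moreover have "t \<in> M1 \<or> t \<in> M2"
    using True unfolding M_def by auto
  moreover have "card (neighbors E t) = Suc (card (neighbors E t - {w}))"
    using is_tree_finite_neighbors[OF tree] \<open>w \<in> neighbors E t\<close> by (rule card.remove)
  ultimately show ?thesis
    using is_tree_finite_neighbors[OF tree, of t] unfolding deg_eq_card_neighbors
    by (auto simp: neighbors_switched_M1 neighbors_switched_M2)
qed (simp add: deg_eq_card_neighbors neighbors_switched_other)

lemma removed_subset: "removed \<subseteq> E"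
  using neighbors_v neighbors_w M_subset
  unfolding removed_def star_edges_def neighbors_def by (auto simp: insert_commute)

lemma added_disjoint: "added \<inter> E = {}"
proof -
  have "y \<notin> neighbors E v" "y \<notin> neighbors E u" if "y \<in> M" for y
    using that neighbors_v neighbors_u switch_facts by auto
  then have "{v, y} \<notin> E" "{u, y} \<notin> E" if "y \<in> M" for y
    using that unfolding neighbors_def by auto
  moreover have "{w, v} \<notin> E" "{w, u} \<notin> E"
    using v_u_notin_neighbors_w unfolding neighbors_def by auto
  ultimately show ?thesis
    using M1_M2_subset_M unfolding added_def star_edges_def by auto
qed

lemma finite_added: "finite added"
  using finite_M unfolding added_def star_edges_def by simp

lemma card_removed: "card removed = 110"
proof -
  have "{c, v} \<notin> star_edges w M" "{v, u} \<notin> star_edges w M" "{c, v} \<noteq> {v, u}"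
    using distinct_vertices by (auto simp: doubleton_in_star_edges doubleton_eq_iff)
  then show ?thesis
    using finite_M card_M unfolding removed_def star_edges_def
    by (simp add: card_star_edges[unfolded star_edges_def])
qed

lemma card_added: "card added = 110"
proof -
  have "star_edges v M1 \<inter> star_edges u M2 = {}"
    using switch_facts by (auto simp: star_edges_def doubleton_eq_iff)
  then have "card (star_edges v M1 \<union> star_edges u M2) = 108"
    using finite_M M1_M2 by (simp add: card_Un_disjoint card_star_edges finite_star_edges)
  moreover have "{w, v} \<notin> star_edges v M1 \<union> star_edges u M2"
    "{w, u} \<notin> star_edges v M1 \<union> star_edges u M2" "{w, v} \<noteq> {w, u}"
    using switch_facts by (auto simp: doubleton_in_star_edges doubleton_eq_iff)
  ultimately show ?thesis
    using finite_M unfolding added_def by (simp add: Un_assoc finite_star_edges)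
qed

lemma connected_to_w:
  assumes "t \<in> {w, c, v, u} \<union> M"
  shows "(w, t) \<in> (adj_rel switched)\<^sup>*"
proof -
  have "{w, c} \<in> E"
    using neighbors_w c_in unfolding neighbors_def by auto
  then have wc: "{w, c} \<in> switched"
    using switch_facts unfolding switched_def removed_def
    by (auto simp: doubleton_in_star_edges doubleton_eq_iff)
  have wv: "{w, v} \<in> switched" and wu: "{w, u} \<in> switched"
    unfolding switched_def added_def by auto
  from assms consider "t = w" | "t = c" | "t = v" | "t = u" | "t \<in> M1" | "t \<in> M2"
    unfolding M_def by blast
  then show ?thesis
  proof cases
    case 5
    then have "{v, t} \<in> switched"
      unfolding switched_def added_def star_edges_def by auto
    then show ?thesis
      using wv by (blast intro: rtrancl_trans adj_rel_rtrancl_edge)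
  next
    case 6
    then have "{u, t} \<in> switched"
      unfolding switched_def added_def star_edges_def by auto
    then show ?thesis
      using wu by (blast intro: rtrancl_trans adj_rel_rtrancl_edge)
  qed (use wc wv wu adj_rel_rtrancl_edge in auto)
qed

lemma tree_switched: "is_tree V switched"
  unfolding switched_def
proof (rule is_tree_exchange_edges[OF tree removed_subset finite_added added_disjoint])
  show "card added = card removed"
    using card_added card_removed by simp
  have "v \<in> neighbors E u" "u \<in> neighbors E v" "M \<subseteq> neighbors E w"
    using neighbors_u neighbors_v neighbors_w M_subset by auto
  then have "w \<in> V" "v \<in> V" "u \<in> V" "M \<subseteq> V"
    using is_tree_neighbors_subset[OF tree] is_tree_edgeD(1)[OF tree edge_w_p] by blast+
  then show "\<forall>e\<in>added. \<exists>a b. e = {a, b} \<and> a \<in> V \<and> b \<in> V \<and> a \<noteq> b"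
    using switch_facts unfolding added_def star_edges_def by fastforce
next
  fix a b assume "{a, b} \<in> removed"
  then have "a \<in> {w, c, v, u} \<union> M" "b \<in> {w, c, v, u} \<union> M"
    unfolding removed_def star_edges_def by (auto simp: doubleton_eq_iff)
  then show "(a, b) \<in> (adj_rel (E - removed \<union> added))\<^sup>*"
    using rtrancl_trans[OF adj_rel_rtrancl_sym[OF connected_to_w] connected_to_w]
    unfolding switched_def by blast
qed

lemma same_edges_off_hub: "e \<inter> {w, v, u} = {} \<Longrightarrow> e \<in> E \<longleftrightarrow> e \<in> switched"
  unfolding switched_def removed_def added_def star_edges_def by auto

lemma abc_edge_switched_off_hub:
  assumes "e \<in> E" "e \<inter> {w, v, u} = {}"
  shows "abc_edge switched e = abc_edge E e"
proof -
  have key: "abc_edge switched {a, b} = abc_edge E {a, b}"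
    if ab: "{a, b} \<in> E" "a \<notin> {w, v, u}" "b \<notin> {w, c, v, u}" for a b
  proof -
    have "a \<noteq> b"
      using is_tree_edgeD(3)[OF tree ab(1)] .
    have deg_b: "deg switched b = deg E b"
      using ab(3) by (rule deg_switched_other)
    show ?thesis
    proof (cases "a = c")
      case True
      then have "deg E b = 2"
        using ab deg_neighbors_c unfolding neighbors_def by auto
      then show ?thesis
        using True \<open>a \<noteq> b\<close> deg_c deg_switched_c deg_b by (simp add: abc_edge_doubleton abc_weight_2)
    next
      case False
      then show ?thesis
        using ab \<open>a \<noteq> b\<close> deg_b deg_switched_other[of a] by (simp add: abc_edge_doubleton)
    qed
  qed
  obtain a b where e: "e = {a, b}"
    using assms(1) is_tree_edges_doubleton[OF tree] by blast
  then have "a \<noteq> b"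
    using assms(1) is_tree_edgeD(3)[OF tree] by simp
  then consider "b \<noteq> c" | "a \<noteq> c"
    by blast
  then show ?thesis
  proof cases
    case 1
    then show ?thesis using key[of a b] assms e by auto
  next
    case 2
    then show ?thesis using key[of b a] assms e by (auto simp: insert_commute)
  qed
qed

lemma sum_neighbors_w:
  "(\<Sum>y\<in>neighbors E w. abc_weight d (deg E y)) =
     abc_weight d (deg E p) + card Ch3 * abc_weight d 4 + card Ch4 * abc_weight d 5"
  using finite_Ch Ch_disjoint p_notin deg_Ch3 deg_Ch4
  unfolding neighbors_w by (simp add: sum.union_disjoint)

lemma notin_Ch: "w \<notin> Ch3 \<union> Ch4" "v \<notin> Ch3 \<union> Ch4" "u \<notin> Ch3 \<union> Ch4" "c \<notin> Ch3"
  using v_u_notin_neighbors_w neighbors_w deg_w deg_Ch3 deg_Ch4 card_Ch3_ge c_in Ch_disjoint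
  by fastforce+

lemma sum_neighbors_switched_w:
  "(\<Sum>y\<in>neighbors switched w. abc_weight d (deg switched y)) =
     2 * abc_weight d 55 + abc_weight d (deg E p)
       + (real (card Ch3) - 107) * abc_weight d 4 + (real (card Ch4) - 1) * abc_weight d 5"
proof -
  let ?g = "\<lambda>y. abc_weight d (deg switched y)" and ?C3 = "Ch3 - M" and ?C4 = "Ch4 - {c}"
  have "neighbors switched w = {v, u, p, c} \<union> (?C3 \<union> ?C4)"
    unfolding neighbors_switched_w neighbors_w using c_in p_distinct M_subset Ch_disjoint by auto
  moreover have "{v, u, p, c} \<inter> (?C3 \<union> ?C4) = {}" "?C3 \<inter> ?C4 = {}"
    using p_notin notin_Ch Ch_disjoint by auto
  ultimately have "sum ?g (neighbors switched w) = sum ?g {v, u, p, c} + (sum ?g ?C3 + sum ?g ?C4)"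
    using finite_Ch by (simp only: sum.union_disjoint finite_Diff finite_Un finite.intros)
  also have "sum ?g {v, u, p, c} = 2 * abc_weight d 55 + abc_weight d (deg E p) + abc_weight d 4"
    using distinct_vertices p_distinct deg_switched_v deg_switched_u deg_switched_c
      deg_switched_other[of p] by simp
  also have "sum ?g ?C3 = (real (card Ch3) - 108) * abc_weight d 4"
  proof -
    have "deg switched y = 4" if "y \<in> ?C3" for y
      using that deg_Ch3 deg_switched_other[of y] notin_Ch by auto
    moreover have "real (card ?C3) = real (card Ch3) - 108"
      using card_Diff_subset[OF finite_M(3) M_subset] card_M card_Ch3_ge by simp
    ultimately show ?thesis
      by simp
  qed
  also have "sum ?g ?C4 = (real (card Ch4) - 1) * abc_weight d 5"
  proof -
    have "deg switched y = 5" if "y \<in> ?C4" for y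
      using that deg_Ch4 deg_switched_other[of y] notin_Ch by auto
    moreover have "real (card ?C4) = real (card Ch4) - 1"
      using finite_Ch c_in card_Ch4_ge by simp
    ultimately show ?thesis
      by simp
  qed
  finally show ?thesis
    by (simp add: algebra_simps)
qed

lemma sum_edges_meeting_hub:
  "sum (abc_edge E) {e \<in> E. e \<inter> {w, v, u} \<noteq> {}} =
     (\<Sum>y\<in>neighbors E w. abc_weight (deg E w) (deg E y)) + 2 * sqrt (1/2)"
proof -
  have "{e \<in> E. e \<inter> {w, v, u} \<noteq> {}} =
      star_edges w (neighbors E w) \<union> star_edges v (neighbors E v) \<union> star_edges u (neighbors E u)"
    unfolding edges_meeting_eq_star_edges[OF is_tree_edges_doubleton[OF tree]] by (simp add: Un_assoc)
  also have "\<dots> = star_edges w (neighbors E w) \<union> star_edges v {c, u}"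
    unfolding neighbors_v neighbors_u by (auto simp: star_edges_def)
  moreover have "star_edges w (neighbors E w) \<inter> star_edges v {c, u} = {}"
    using distinct_vertices by (auto simp: star_edges_def doubleton_eq_iff)
  ultimately show ?thesis
    using is_tree_finite_neighbors[OF tree] is_tree_notin_neighbors[OF tree, of w]
      distinct_vertices deg_v deg_c deg_u
    by (simp add: sum.union_disjoint finite_star_edges sum_abc_edge_star_edges abc_weight_def)
qed

lemma sum_edges_meeting_hub_switched:
  "sum (abc_edge switched) {e \<in> switched. e \<inter> {w, v, u} \<noteq> {}} =
     (\<Sum>y\<in>neighbors switched w. abc_weight (deg switched w) (deg switched y))
       + 108 * abc_weight 55 4"
proof -
  have "{e \<in> switched. e \<inter> {w, v, u} \<noteq> {}} =
      star_edges w (neighbors switched w) \<union> star_edges v (neighbors switched v)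
        \<union> star_edges u (neighbors switched u)"
    unfolding edges_meeting_eq_star_edges[OF is_tree_edges_doubleton[OF tree_switched]]
    by (simp add: Un_assoc)
  also have "\<dots> = star_edges w (neighbors switched w) \<union> (star_edges v M1 \<union> star_edges u M2)"
    unfolding neighbors_switched_v neighbors_switched_u star_edges_def
    using neighbors_switched_w by (auto simp: insert_commute)
  moreover have "star_edges w (neighbors switched w) \<inter> (star_edges v M1 \<union> star_edges u M2) = {}"
    "star_edges v M1 \<inter> star_edges u M2 = {}"
    using switch_facts by (auto simp: star_edges_def doubleton_eq_iff)
  moreover have "deg switched y = 4" if "y \<in> M" for y
    using that notin_M deg_M deg_switched_other[of y] by auto
  moreover have "v \<notin> M1" "u \<notin> M2"
    using notin_M M1_M2_subset_M by auto
  ultimately show ?thesis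
    using is_tree_finite_neighbors[OF tree_switched] is_tree_notin_neighbors[OF tree_switched, of w]
      finite_M M1_M2 M1_M2_subset_M deg_switched_v deg_switched_u
    by (simp add: sum.union_disjoint finite_star_edges sum_abc_edge_star_edges subset_iff)
qed

lemma ABC_switched_diff:
  "ABC E - ABC switched =
     card Ch3 * abc_weight (deg E w) 4 + card Ch4 * abc_weight (deg E w) 5
       + abc_weight (deg E w) (deg E p) + 2 * sqrt (1/2)
     - ((real (card Ch3) - 107) * abc_weight (deg switched w) 4
       + (real (card Ch4) - 1) * abc_weight (deg switched w) 5
       + abc_weight (deg switched w) (deg E p) + 2 * abc_weight (deg switched w) 55
       + 108 * abc_weight 55 4)"
proof -
  have "finite E" "finite switched"
    using is_tree_finite_edges tree tree_switched by auto
  then have "ABC E - ABC switched = sum (abc_edge E) {e \<in> E. e \<inter> {w, v, u} \<noteq> {}}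
      - sum (abc_edge switched) {e \<in> switched. e \<inter> {w, v, u} \<noteq> {}}"
    using same_edges_off_hub abc_edge_switched_off_hub by (rule ABC_diff_eq_edges_meeting)
  then show ?thesis
    unfolding sum_edges_meeting_hub sum_edges_meeting_hub_switched
      sum_neighbors_w sum_neighbors_switched_w
    by simp
qed

lemma ABC_switched_less:
  assumes "216 \<le> card Ch3 + card Ch4" "card Ch4 \<le> 4"
  shows "ABC switched < ABC E"
proof -
  define z where "z = real (card Ch3 + card Ch4)"
  have deg_w_z: "real (deg E w) = z + 1" "real (deg switched w) = z - 105"
    "z - card Ch4 = card Ch3" "z - card Ch4 - 107 = real (card Ch3) - 107"
    unfolding z_def using deg_w deg_switched_w assms(1) by auto
  have "1 \<le> deg E p"
  proof -
    have "w \<in> neighbors E p"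
      using neighbors_w in_neighbors_commute[of p E w] by simp
    then show ?thesis
      using is_tree_finite_neighbors[OF tree, of p]
      unfolding deg_eq_card_neighbors by (auto simp: Suc_le_eq card_gt_0_iff)
  qed
  then have "216 \<le> z" "1 \<le> real (card Ch4)" "real (card Ch4) \<le> 4" "1 \<le> real (deg E p)"
    unfolding z_def using assms card_Ch4_ge by auto
  from abc_switch_gain[OF this] show ?thesis
    using ABC_switched_diff unfolding deg_w_z by linarith
qed

end

section \<open>Branches\<close>

lemma children_subset_neighbors: "children E r w \<subseteq> neighbors E w"
  unfolding children_def child_def neighbors_def by auto

lemma is_tree_finite_children: "is_tree V E \<Longrightarrow> finite (children E r w)"
  using finite_subset[OF children_subset_neighbors is_tree_finite_neighbors] .

lemma is_tree_neighbors_eq_of_card: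
  assumes "is_tree V E" "S \<subseteq> neighbors E t" "card S = deg E t"
  shows "neighbors E t = S"
  using card_subset_eq[OF is_tree_finite_neighbors[OF assms(1)] assms(2)] assms(3)
  unfolding deg_eq_card_neighbors by simp

lemma is_tree_parent:
  assumes "is_tree V E" "deg E w = card (children E r w) + 1"
  obtains p where "neighbors E w = insert p (children E r w)" "p \<notin> children E r w"
proof -
  have "card (neighbors E w - children E r w) = 1"
    using assms card_Diff_subset[OF is_tree_finite_children[OF assms(1)] children_subset_neighbors]
    unfolding deg_eq_card_neighbors by simp
  then obtain p where "neighbors E w - children E r w = {p}"
    by (rule card_1_singletonE)
  then show ?thesis
    using that children_subset_neighbors[of E r w] by blast
qed

lemma B_branch_deg_neighbors:
  assumes tree: "is_tree V E" and B: "is_B_branch E r k c"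
    and w: "w \<in> neighbors E c" "deg E w \<noteq> 2"
    and t: "t \<in> neighbors E c" "t \<noteq> w"
  shows "deg E t = 2"
proof -
  have deg_children: "\<And>y. y \<in> children E r c \<Longrightarrow> deg E y = 2"
    using B unfolding is_B_branch_def by blast
  have "neighbors E c = insert w (children E r c)"
  proof (rule is_tree_neighbors_eq_of_card[OF tree])
    show "insert w (children E r c) \<subseteq> neighbors E c"
      using w children_subset_neighbors[of E r c] by blast
    have "w \<notin> children E r c"
      using w deg_children by blast
    then show "card (insert w (children E r c)) = deg E c"
      using B is_tree_finite_children[OF tree] unfolding is_B_branch_def by simp
  qed
  then show ?thesis
    using t deg_children by auto
qed

lemma B_branch_pendant_path:
  assumes tree: "is_tree V E" and B: "is_B_branch E r k c"
  obtains v u where "neighbors E v = {c, u}" "neighbors E u = {v}"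
proof -
  have "children E r c \<noteq> {}"
    using B unfolding is_B_branch_def by auto
  then obtain v where v: "v \<in> children E r c"
    by blast
  then have "card (children E r v) = 1" and deg: "deg E v = 2" "deg E c = k + 1" "2 \<le> k"
    using B unfolding is_B_branch_def by auto
  then obtain u where u: "children E r v = {u}"
    by (metis card_1_singletonE)
  then have "deg E u = 1"
    using B v unfolding is_B_branch_def by auto
  have "v \<in> neighbors E c" "u \<in> neighbors E v"
    using v u children_subset_neighbors[of E r c] children_subset_neighbors[of E r v] by auto
  then have "c \<in> neighbors E v" "v \<in> neighbors E u"
    using in_neighbors_commute[of v E c] in_neighbors_commute[of u E v] by auto
  moreover have "c \<noteq> u"
    using deg \<open>deg E u = 1\<close> by auto
  ultimately have "neighbors E v = {c, u}" "neighbors E u = {v}"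
    using \<open>u \<in> neighbors E v\<close> deg \<open>deg E u = 1\<close>
    by (auto intro!: is_tree_neighbors_eq_of_card[OF tree])
  then show ?thesis
    using that by blast
qed

lemma obtain_disjoint_subsets_with_card:
  assumes "finite S" "2 * n \<le> card S"
  obtains A B where "A \<subseteq> S" "B \<subseteq> S" "A \<inter> B = {}" "card A = n" "card B = n"
proof -
  obtain A where A: "A \<subseteq> S" "card A = n"
    using assms(2) obtain_subset_with_card_n[of n S] by auto
  then have "n \<le> card (S - A)"
    using assms by (simp add: card_Diff_subset finite_subset)
  then obtain B where "B \<subseteq> S - A" "card B = n"
    by (rule obtain_subset_with_card_n)
  with A show ?thesis
    using that by blast
qed

lemma D4_branch_switch:
  assumes tree: "is_tree V E" and D: "is_D4_branch E r z x w" and x: "1 \<le> x" "x + 108 \<le> z"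
  obtains p c v u Ch3 Ch4 M1 M2
  where "D4_switch V E w p c v u Ch3 Ch4 M1 M2" "card Ch3 = z - x" "card Ch4 = x"
proof -
  define Ch3 where "Ch3 = {y \<in> children E r w. is_B_branch E r 3 y}"
  define Ch4 where "Ch4 = {y \<in> children E r w. is_B_branch E r 4 y}"
  have children: "children E r w = Ch3 \<union> Ch4" and card: "card Ch3 = z - x" "card Ch4 = x"
    and deg_w: "deg E w = card (children E r w) + 1"
    using D unfolding is_D4_branch_def Ch3_def Ch4_def by auto
  obtain p where p: "neighbors E w = insert p (Ch3 \<union> Ch4)" "p \<notin> Ch3 \<union> Ch4"
    using is_tree_parent[OF tree deg_w] unfolding children .
  have deg_Ch: "\<And>y. y \<in> Ch3 \<Longrightarrow> deg E y = 4" "\<And>y. y \<in> Ch4 \<Longrightarrow> deg E y = 5"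
    unfolding Ch3_def Ch4_def is_B_branch_def by auto
  obtain c where c: "c \<in> Ch4"
    using card(2) x(1) by fastforce
  then have B: "is_B_branch E r 4 c"
    unfolding Ch4_def by simp
  have w_c: "w \<in> neighbors E c"
    using c p(1) in_neighbors_commute[of c E w] by simp
  have "deg E w \<noteq> 2"
    using deg_w D x unfolding is_D4_branch_def by simp
  note deg_neighbors_c = B_branch_deg_neighbors[OF tree B w_c this]
  obtain v u where "neighbors E v = {c, u}" "neighbors E u = {v}"
    using B_branch_pendant_path[OF tree B] .
  have "finite Ch3"
    using is_tree_finite_children[OF tree, of r w] unfolding children by simp
  moreover have "2 * 54 \<le> card Ch3"
    using card x by simp
  ultimately obtain M1 M2
    where "M1 \<subseteq> Ch3" "M2 \<subseteq> Ch3" "M1 \<inter> M2 = {}" "card M1 = 54" "card M2 = 54"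
    by (rule obtain_disjoint_subsets_with_card)
  with tree p deg_Ch c deg_neighbors_c \<open>neighbors E v = {c, u}\<close> \<open>neighbors E u = {v}\<close>
  have "D4_switch V E w p c v u Ch3 Ch4 M1 M2"
    by unfold_locales auto
  then show ?thesis
    using that card by blast
qed

theorem lemma6:
  fixes V :: "nat set" and E :: "nat set set" and r :: nat and x z :: nat
  assumes "minimal_ABC V E"
    and "is_root V E r"
    and "x \<in> {1, 2, 3, 4}"
    and "z \<ge> 216"
  shows "\<not> (\<exists>w\<in>V. is_D4_branch E r z x w)"
proof
  assume "\<exists>w\<in>V. is_D4_branch E r z x w"
  then obtain w where D: "is_D4_branch E r z x w"
    by blast
  have tree: "is_tree V E"
    using assms(1) unfolding minimal_ABC_def by simp
  have x: "1 \<le> x" "x \<le> 4" "x + 108 \<le> z"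
    using assms(3,4) by auto
  obtain p c v u Ch3 Ch4 M1 M2 where switch: "D4_switch V E w p c v u Ch3 Ch4 M1 M2"
    and "card Ch3 = z - x" "card Ch4 = x"
    by (rule D4_branch_switch[OF tree D x(1,3)])
  then have "ABC (D4_switch.switched E w c v u M1 M2) < ABC E"
    using D4_switch.ABC_switched_less[OF switch] x assms(4) by simp
  moreover have "is_tree V (D4_switch.switched E w c v u M1 M2)"
    using D4_switch.tree_switched[OF switch] .
  ultimately show False
    using assms(1) unfolding minimal_ABC_def by fastforce
qed

end
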